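(* Let $k\in\{1,2,\dots\}\cup\{\infty\}$, let $M$ be a one-dimensional locally Euclidean topological space (not necessarily Hausdorff or second countable), let $\mathcal{U}$ be a $C^k$-atlas on $M$, and let $U\subset M$ be an open subset homeomorphic to $\mathbb{R}$. Then there exists a homeomorphism $\varphi\colon U\to\mathbb{R}$ such that $\mathcal{U}\cup\{(U,\varphi)\}$ is a $C^k$-atlas on $M$, $C^k$-compatible with $\mathcal{U}$.
   Context: A chart on $M$ is a homeomorphism of an open subset of $M$ onto an open subset of $\mathbb{R}$; charts $(U,\varphi),(V,\psi)$ are $C^k$-compatible if $U\cap V=\varnothing$ or $\psi\circ\varphi^{-1}\colon\varphi(U\cap V)\to\psi(U\cap V)$ is a $C^k$-diffeomorphism; a $C^k$-atlas is a family of pairwise $C^k$-compatible charts covering $M$; two atlases are $C^k$-compatible if their union is a $C^k$-atlas. *)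

theory Defs
  imports "HOL-Analysis.Analysis" "HOL-Library.Extended_Nat"
begin

definition locally_euclidean1 :: "'a topology \<Rightarrow> bool" where
  "locally_euclidean1 M \<longleftrightarrow>
     (\<forall>x\<in>topspace M. \<exists>V W. openin M V \<and> x \<in> V \<and> open W \<and>
        subtopology M V homeomorphic_space subtopology euclideanreal W)"

definition Ck_on :: "enat \<Rightarrow> real set \<Rightarrow> (real \<Rightarrow> real) \<Rightarrow> bool" where
  "Ck_on k S f \<longleftrightarrow>
     (\<exists>D :: nat \<Rightarrow> real \<Rightarrow> real.
        (\<forall>x\<in>S. D 0 x = f x) \<and>
        (\<forall>j. enat j < k \<longrightarrow> (\<forall>x\<in>S. (D j has_real_derivative D (Suc j) x) (at x))) \<and>
        (\<forall>j. enat j \<le> k \<longrightarrow> continuous_on S (D j)))"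

definition Ck_diffeo :: "enat \<Rightarrow> real set \<Rightarrow> real set \<Rightarrow> (real \<Rightarrow> real) \<Rightarrow> bool" where
  "Ck_diffeo k S T f \<longleftrightarrow> bij_betw f S T \<and> Ck_on k S f \<and> Ck_on k T (inv_into S f)"

definition is_chart :: "'a topology \<Rightarrow> 'a set \<times> ('a \<Rightarrow> real) \<Rightarrow> bool" where
  "is_chart M c \<longleftrightarrow> (case c of (U, \<phi>) \<Rightarrow>
     openin M U \<and> open (\<phi> ` U) \<and>
     homeomorphic_map (subtopology M U) (subtopology euclideanreal (\<phi> ` U)) \<phi>)"

definition Ck_compatible_charts :: "enat \<Rightarrow> 'a set \<times> ('a \<Rightarrow> real) \<Rightarrow> 'a set \<times> ('a \<Rightarrow> real) \<Rightarrow> bool" where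
  "Ck_compatible_charts k c d \<longleftrightarrow> (case c of (U, \<phi>) \<Rightarrow> case d of (V, \<psi>) \<Rightarrow>
     U \<inter> V = {} \<or> Ck_diffeo k (\<phi> ` (U \<inter> V)) (\<psi> ` (U \<inter> V)) (\<psi> \<circ> inv_into U \<phi>))"

definition Ck_atlas :: "enat \<Rightarrow> 'a topology \<Rightarrow> ('a set \<times> ('a \<Rightarrow> real)) set \<Rightarrow> bool" where
  "Ck_atlas k M A \<longleftrightarrow>
     (\<forall>c\<in>A. is_chart M c) \<and>
     (\<forall>c\<in>A. \<forall>d\<in>A. Ck_compatible_charts k c d) \<and>
     \<Union> (fst ` A) = topspace M"

definition Ck_atlases_compatible :: "enat \<Rightarrow> 'a topology \<Rightarrow> ('a set \<times> ('a \<Rightarrow> real)) set \<Rightarrow> ('a set \<times> ('a \<Rightarrow> real)) set \<Rightarrow> bool" where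
  "Ck_atlases_compatible k M A B \<longleftrightarrow> Ck_atlas k M (A \<union> B)"

end

theory Submission
  imports Defs "HOL-Computational_Algebra.Polynomial"
begin

text \<open>Transporting the charts of the atlas along a homeomorphism \<open>U \<cong> \<real>\<close> turns the
  problem into one about a \<open>C\<^sup>k\<close> structure on the real line: continuous injective charts
  with \<open>C\<^sup>k\<close> transition maps. A smooth step function read in a single chart gives steps
  \<open>T\<close> from 0 to 1 that are \<open>C\<^sup>k\<close> in every chart and have nonvanishing chart
  derivative where they increase. By compactness, for each integer \<open>n\<close> finitely many such
  steps supported in \<open>[n - 1, n + 2]\<close> have increasing parts covering \<open>[n, n + 1]\<close>. The
  locally finite sum \<open>F = \<Sum> (T - T 0)\<close> of all of them is strictly increasing and
  unbounded, hence a homeomorphism of \<open>\<real>\<close>. It is \<open>C\<^sup>k\<close> in every chart, and its chart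
  derivative never vanishes because the chart derivatives of monotone steps all have the
  same sign. By the inverse function theorem \<open>F \<circ> g\<^sup>-\<^sup>1\<close> is then a \<open>C\<^sup>k\<close>
  diffeomorphism for every chart \<open>g\<close>, so \<open>F \<circ> h\<close> is a chart on \<open>U\<close> compatible with
  the atlas.\<close>

section \<open>\<open>C\<^sup>k\<close> functions on the real line\<close>

fun Cn_on :: "nat \<Rightarrow> real set \<Rightarrow> (real \<Rightarrow> real) \<Rightarrow> bool" where
  "Cn_on 0 S f \<longleftrightarrow> continuous_on S f"
| "Cn_on (Suc n) S f \<longleftrightarrow> (\<forall>x\<in>S. f differentiable (at x)) \<and> Cn_on n S (deriv f)"

lemma Cn_on_iff_higher_deriv:
  "Cn_on n S f \<longleftrightarrow>
     (\<forall>j<n. \<forall>x\<in>S. (deriv ^^ j) f differentiable (at x)) \<and> continuous_on S ((deriv ^^ n) f)"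
proof (induction n arbitrary: f)
  case (Suc n)
  show ?case
    unfolding Cn_on.simps Suc.IH All_less_Suc2 funpow_Suc_right o_def by simp
qed simp

lemma Cn_on_imp_continuous_on: "Cn_on n S f \<Longrightarrow> continuous_on S f"
  by (cases n) (auto intro: continuous_at_imp_continuous_on differentiable_imp_continuous_within)

lemma Cn_on_Suc_imp: "Cn_on (Suc n) S f \<Longrightarrow> Cn_on n S f"
proof (induction n arbitrary: f)
  case 0
  then show ?case using Cn_on_imp_continuous_on[of "Suc 0" S f] by simp
qed auto

lemma Cn_on_cong:
  assumes "open S" "\<And>x. x \<in> S \<Longrightarrow> f x = g x" "Cn_on n S f"
  shows "Cn_on n S g"
  using assms(2,3)
proof (induction n arbitrary: f g)
  case 0
  then show ?case using continuous_on_cong by force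
next
  case (Suc n)
  have "(g has_real_derivative deriv f x) (at x)" if "x \<in> S" for x
  proof (rule has_field_derivative_transform_within_open[OF _ \<open>open S\<close> that])
    show "(f has_real_derivative deriv f x) (at x)"
      using Suc.prems(2) that DERIV_deriv_iff_real_differentiable by auto
  qed (use Suc.prems(1) in auto)
  moreover have "deriv f x = deriv g x" if "x \<in> S" for x
    by (rule deriv_cong_ev) (use assms(1) Suc.prems(1) that in \<open>auto simp: eventually_nhds\<close>)
  ultimately show ?case
    using Suc by (auto simp: real_differentiable_def)
qed

lemma Cn_on_subset: "T \<subseteq> S \<Longrightarrow> Cn_on n S f \<Longrightarrow> Cn_on n T f"
  by (induction n arbitrary: f) (auto intro: continuous_on_subset)

lemma Cn_on_local:
  assumes "\<And>x. x \<in> S \<Longrightarrow> \<exists>T. open T \<and> x \<in> T \<and> T \<subseteq> S \<and> Cn_on n T f"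
  shows "Cn_on n S f"
  using assms
proof (induction n arbitrary: f)
  case 0
  have "isCont f x" if "x \<in> S" for x
    using "0.prems"[OF that] continuous_on_eq_continuous_at by auto
  then show ?case by (simp add: continuous_at_imp_continuous_on)
next
  case (Suc n)
  have "\<forall>x\<in>S. f differentiable (at x)"
    using Suc.prems by fastforce
  moreover have "Cn_on n S (deriv f)"
    by (rule Suc.IH) (use Suc.prems in fastforce)
  ultimately show ?case by simp
qed

lemma Cn_on_const: "Cn_on n S (\<lambda>x. c)"
  by (induction n arbitrary: c) auto

lemma Cn_on_id: "Cn_on n S (\<lambda>x. x)"
  by (cases n) (auto simp: Cn_on_const)

lemma Cn_on_add:
  assumes "open S" "Cn_on n S f" "Cn_on n S g"
  shows "Cn_on n S (\<lambda>x. f x + g x)"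
  using assms(2,3)
proof (induction n arbitrary: f g)
  case (Suc n)
  have "deriv f x + deriv g x = deriv (\<lambda>x. f x + g x) x" if "x \<in> S" for x
    using Suc.prems that
    by (auto intro!: DERIV_imp_deriv[symmetric] DERIV_add simp: DERIV_deriv_iff_real_differentiable)
  moreover have "Cn_on n S (\<lambda>x. deriv f x + deriv g x)"
    using Suc by simp
  ultimately have "Cn_on n S (deriv (\<lambda>x. f x + g x))"
    by (rule Cn_on_cong[OF \<open>open S\<close>])
  then show ?case
    using Suc.prems by auto
qed (simp add: continuous_on_add)

lemma Cn_on_mult:
  assumes "open S" "Cn_on n S f" "Cn_on n S g"
  shows "Cn_on n S (\<lambda>x. f x * g x)"
  using assms(2,3)
proof (induction n arbitrary: f g)
  case (Suc n)
  have "deriv f x * g x + f x * deriv g x = deriv (\<lambda>x. f x * g x) x" if "x \<in> S" for x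
  proof -
    have "(f has_real_derivative deriv f x) (at x)" "(g has_real_derivative deriv g x) (at x)"
      using Suc.prems that by (auto simp: DERIV_deriv_iff_real_differentiable)
    from DERIV_mult'[OF this] show ?thesis
      by (intro DERIV_imp_deriv[symmetric]) (simp add: add.commute)
  qed
  moreover have "Cn_on n S f" "Cn_on n S g"
    using Suc.prems Cn_on_Suc_imp by blast+
  then have "Cn_on n S (\<lambda>x. deriv f x * g x + f x * deriv g x)"
    using Suc by (intro Cn_on_add[OF \<open>open S\<close>] Suc.IH) auto
  ultimately have "Cn_on n S (deriv (\<lambda>x. f x * g x))"
    by (rule Cn_on_cong[OF \<open>open S\<close>])
  then show ?case
    using Suc.prems by auto
qed (simp add: continuous_on_mult)

lemma Cn_on_compose:
  assumes "open S" "open T" "Cn_on n T f" "Cn_on n S g" "g ` S \<subseteq> T"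
  shows "Cn_on n S (\<lambda>x. f (g x))"
  using assms(3-5)
proof (induction n arbitrary: f g)
  case 0
  then show ?case using continuous_on_compose2 by auto
next
  case (Suc n)
  have "deriv f (g x) * deriv g x = deriv (\<lambda>x. f (g x)) x" if "x \<in> S" for x
    using Suc.prems that
    by (intro DERIV_imp_deriv[symmetric] DERIV_chain2) (auto simp: DERIV_deriv_iff_real_differentiable)
  moreover have "Cn_on n S (\<lambda>x. deriv f (g x))"
    by (rule Suc.IH) (use Suc.prems Cn_on_Suc_imp in auto)
  then have "Cn_on n S (\<lambda>x. deriv f (g x) * deriv g x)"
    using Suc.prems by (intro Cn_on_mult[OF \<open>open S\<close>]) auto
  ultimately have "Cn_on n S (deriv (\<lambda>x. f (g x)))"
    by (rule Cn_on_cong[OF \<open>open S\<close>])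
  moreover have "(\<lambda>x. f (g x)) differentiable (at x)" if "x \<in> S" for x
    using Suc.prems that differentiable_chain_at[of g x f] by (auto simp: o_def)
  ultimately show ?case
    by simp
qed

lemma Cn_on_inverse: "Cn_on n (- {0}) inverse"
proof (induction n)
  case (Suc n)
  have "- 1 * (inverse x * inverse x) = deriv inverse x" if "x \<in> - {0}" for x :: real
    using that by (intro DERIV_imp_deriv[symmetric]) (auto intro!: derivative_eq_intros simp: power2_eq_square)
  moreover have "Cn_on n (- {0}) (\<lambda>x. - 1 * (inverse x * inverse x))"
    by (intro Cn_on_mult Cn_on_const Suc) auto
  ultimately have "Cn_on n (- {0}) (deriv inverse)"
    by (rule Cn_on_cong[rotated]) auto
  moreover have "inverse differentiable (at x)" if "x \<in> - {0}" for x :: real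
    using that DERIV_inverse[of x UNIV] real_differentiable_def by auto
  ultimately show ?case
    by simp
qed (simp add: continuous_on_inverse continuous_on_id)

lemma Cn_on_inverse_function:
  assumes "open S" "open T" "Cn_on n S f" "\<And>x. x \<in> S \<Longrightarrow> deriv f x \<noteq> 0"
    and "g ` T \<subseteq> S" "\<And>y. y \<in> T \<Longrightarrow> f (g y) = y" "continuous_on T g"
  shows "Cn_on n T g"
  using assms(3)
proof (induction n)
  case 0
  then show ?case using assms(7) by simp
next
  case (Suc n)
  have Cn_g: "Cn_on n T g"
    using Suc Cn_on_Suc_imp by blast
  have DERIV_g: "(g has_real_derivative inverse (deriv f (g y))) (at y)" if "y \<in> T" for y
  proof -
    obtain r where r: "r > 0" "ball y r \<subseteq> T"
      using assms(2) \<open>y \<in> T\<close> open_contains_ball by blast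
    show ?thesis
    proof (rule DERIV_inverse_function[where a = "y - r" and b = "y + r"])
      show "(f has_real_derivative deriv f (g y)) (at (g y))"
        using Suc.prems assms(5) \<open>y \<in> T\<close> DERIV_deriv_iff_real_differentiable by auto
      show "f (g z) = z" if "y - r < z" "z < y + r" for z
        using assms(6) r that by (auto simp: dist_real_def subset_iff)
      show "isCont g y"
        using assms(2,7) \<open>y \<in> T\<close> continuous_on_eq_continuous_at by blast
    qed (use assms(4,5) r \<open>y \<in> T\<close> in auto)
  qed
  have "Cn_on n T (\<lambda>y. deriv f (g y))"
    by (rule Cn_on_compose[OF assms(2,1)]) (use Suc.prems Cn_g assms(5) in auto)
  then have "Cn_on n T (\<lambda>y. inverse (deriv f (g y)))"
    by (rule Cn_on_compose[OF assms(2) _ Cn_on_inverse, rotated]) (use assms(4,5) in auto)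
  then have "Cn_on n T (deriv g)"
    by (rule Cn_on_cong[OF assms(2), rotated]) (use DERIV_g DERIV_imp_deriv in metis)
  moreover have "\<forall>y\<in>T. g differentiable (at y)"
    using DERIV_g real_differentiable_def by blast
  ultimately show ?case
    by simp
qed

lemma Ck_on_imp_Cn_on:
  assumes "open S" "Ck_on k S f" "enat n \<le> k"
  shows "Cn_on n S f"
proof -
  obtain D where D0: "\<forall>x\<in>S. D 0 x = f x"
    and D_deriv: "\<forall>j. enat j < k \<longrightarrow> (\<forall>x\<in>S. (D j has_real_derivative D (Suc j) x) (at x))"
    and D_cont: "\<forall>j. enat j \<le> k \<longrightarrow> continuous_on S (D j)"
    using assms(2) unfolding Ck_on_def by blast
  have higher_deriv: "((deriv ^^ j) f has_real_derivative D (Suc j) x) (at x)"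
    if "enat j < k" "x \<in> S" "\<forall>y\<in>S. D j y = (deriv ^^ j) f y" for j x
    using has_field_derivative_transform_within_open[OF _ assms(1) \<open>x \<in> S\<close>] D_deriv that by blast
  have D_eq: "\<forall>x\<in>S. D j x = (deriv ^^ j) f x" if "enat j \<le> k" for j
    using that
  proof (induction j)
    case (Suc j)
    then have "enat j < k"
      using Suc_ile_eq by blast
    with Suc higher_deriv show ?case
      by (auto intro: DERIV_imp_deriv[symmetric])
  qed (use D0 in simp)
  have "(deriv ^^ j) f differentiable (at x)" if "j < n" "x \<in> S" for j x
  proof -
    have "enat j < k"
      using assms(3) \<open>j < n\<close> by (metis enat_ord_simps(2) order_less_le_trans)
    then show ?thesis
      using higher_deriv D_eq \<open>x \<in> S\<close> real_differentiable_def less_imp_le by blast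
  qed
  moreover have "continuous_on S ((deriv ^^ n) f)"
    using D_cont D_eq assms(3) continuous_on_cong by fastforce
  ultimately show ?thesis
    by (simp add: Cn_on_iff_higher_deriv)
qed

lemma Cn_on_imp_Ck_on:
  assumes "\<And>n. enat n \<le> k \<Longrightarrow> Cn_on n S f"
  shows "Ck_on k S f"
  unfolding Ck_on_def
proof (intro exI[of _ "\<lambda>j. (deriv ^^ j) f"] conjI allI impI ballI)
  fix j x assume "enat j < k" "x \<in> S"
  then have "Cn_on (Suc j) S f"
    using assms Suc_ile_eq by blast
  with \<open>x \<in> S\<close> show "((deriv ^^ j) f has_real_derivative (deriv ^^ Suc j) f x) (at x)"
    by (simp add: Cn_on_iff_higher_deriv DERIV_deriv_iff_real_differentiable)
qed (use assms in \<open>auto simp: Cn_on_iff_higher_deriv\<close>)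

lemma Ck_on_iff_Cn_on: "open S \<Longrightarrow> Ck_on k S f \<longleftrightarrow> (\<forall>n. enat n \<le> k \<longrightarrow> Cn_on n S f)"
  using Ck_on_imp_Cn_on Cn_on_imp_Ck_on by blast

lemma Ck_on_cong: "(\<And>x. x \<in> S \<Longrightarrow> f x = g x) \<Longrightarrow> Ck_on k S f \<Longrightarrow> Ck_on k S g"
  unfolding Ck_on_def by auto

lemma Ck_on_subset: "T \<subseteq> S \<Longrightarrow> Ck_on k S f \<Longrightarrow> Ck_on k T f"
  unfolding Ck_on_def by (blast intro: continuous_on_subset)

lemma Ck_on_empty: "Ck_on k {} f"
  unfolding Ck_on_def by auto

lemma Ck_on_imp_continuous_on: "Ck_on k S f \<Longrightarrow> continuous_on S f"
  unfolding Ck_on_def using continuous_on_cong zero_le by (metis zero_enat_def)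

lemma Ck_on_imp_DERIV:
  assumes "open S" "k \<ge> 1" "Ck_on k S f" "x \<in> S"
  shows "(f has_real_derivative deriv f x) (at x)"
  using assms Cn_on.simps(2)[of 0] DERIV_deriv_iff_real_differentiable
  by (auto simp: Ck_on_iff_Cn_on one_enat_def)

lemma Ck_on_local:
  assumes "open S" "\<And>x. x \<in> S \<Longrightarrow> \<exists>T. open T \<and> x \<in> T \<and> T \<subseteq> S \<and> Ck_on k T f"
  shows "Ck_on k S f"
  unfolding Ck_on_iff_Cn_on[OF assms(1)]
proof (intro allI impI Cn_on_local)
  show "\<exists>T. open T \<and> x \<in> T \<and> T \<subseteq> S \<and> Cn_on n T f" if "enat n \<le> k" "x \<in> S" for n x
    using assms(2)[OF \<open>x \<in> S\<close>] Ck_on_iff_Cn_on that(1) by blast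
qed

lemma Ck_on_const: "open S \<Longrightarrow> Ck_on k S (\<lambda>x. c)"
  by (simp add: Ck_on_iff_Cn_on Cn_on_const)

lemma Ck_on_id: "open S \<Longrightarrow> Ck_on k S (\<lambda>x. x)"
  by (simp add: Ck_on_iff_Cn_on Cn_on_id)

lemma Ck_on_add: "open S \<Longrightarrow> Ck_on k S f \<Longrightarrow> Ck_on k S g \<Longrightarrow> Ck_on k S (\<lambda>x. f x + g x)"
  by (simp add: Ck_on_iff_Cn_on Cn_on_add)

lemma Ck_on_mult: "open S \<Longrightarrow> Ck_on k S f \<Longrightarrow> Ck_on k S g \<Longrightarrow> Ck_on k S (\<lambda>x. f x * g x)"
  by (simp add: Ck_on_iff_Cn_on Cn_on_mult)

lemma Ck_on_compose:
  "open S \<Longrightarrow> open T \<Longrightarrow> Ck_on k T f \<Longrightarrow> Ck_on k S g \<Longrightarrow> g ` S \<subseteq> T \<Longrightarrow> Ck_on k S (\<lambda>x. f (g x))"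
  by (simp add: Ck_on_iff_Cn_on Cn_on_compose)

lemma Ck_on_sum:
  assumes "open S" "finite I" "\<And>i. i \<in> I \<Longrightarrow> Ck_on k S (f i)"
  shows "Ck_on k S (\<lambda>x. \<Sum>i\<in>I. f i x)"
  using assms(2,3) by (induction I rule: finite_induct) (auto intro: Ck_on_const Ck_on_add assms(1))

lemma Ck_on_inverse_function:
  assumes "open S" "open T" "Ck_on k S f" "\<And>x. x \<in> S \<Longrightarrow> deriv f x \<noteq> 0"
    and "g ` T \<subseteq> S" "\<And>y. y \<in> T \<Longrightarrow> f (g y) = y" "continuous_on T g"
  shows "Ck_on k T g"
  using assms(3) unfolding Ck_on_iff_Cn_on[OF assms(1)] Ck_on_iff_Cn_on[OF assms(2)]
  using Cn_on_inverse_function[OF assms(1,2) _ assms(4-7)] by blast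

lemma Ck_diffeo_onto_image:
  assumes "open S" "Ck_on k S f" "inj_on f S" "\<And>x. x \<in> S \<Longrightarrow> deriv f x \<noteq> 0"
  shows "Ck_diffeo k S (f ` S) f"
proof -
  have "continuous_on S f"
    using assms(2) by (rule Ck_on_imp_continuous_on)
  then have "open (f ` S)"
    using invariance_of_domain assms(1,3) by blast
  moreover have "continuous_on (f ` S) (inv_into S f)"
    by (rule continuous_on_inverse_open[OF assms(1) \<open>continuous_on S f\<close>]) (use assms(3) in auto)
  ultimately have "Ck_on k (f ` S) (inv_into S f)"
    by (intro Ck_on_inverse_function[OF assms(1) _ assms(2,4)]) (auto simp: f_inv_into_f inv_into_into)
  then show ?thesis
    using assms(2,3) by (simp add: Ck_diffeo_def bij_betw_def)
qed

lemma Ck_diffeo_cong: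
  assumes "Ck_diffeo k S T f" "\<And>x. x \<in> S \<Longrightarrow> f x = g x"
  shows "Ck_diffeo k S T g"
proof -
  have "inv_into S f y = inv_into S g y" for y
  proof -
    have "(\<lambda>x. x \<in> S \<and> f x = y) = (\<lambda>x. x \<in> S \<and> g x = y)"
      using assms(2) by auto
    then show ?thesis
      by (simp add: inv_into_def)
  qed
  then show ?thesis
    using assms bij_betw_cong Ck_on_cong unfolding Ck_diffeo_def by (metis (no_types, lifting))
qed

lemma Ck_diffeo_inv_into:
  assumes "Ck_diffeo k S T f"
  shows "Ck_diffeo k T S (inv_into S f)"
proof -
  have f: "bij_betw f S T" "Ck_on k S f" "Ck_on k T (inv_into S f)"
    using assms unfolding Ck_diffeo_def by auto
  have "Ck_on k S (inv_into T (inv_into S f))"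
    using Ck_on_cong[OF _ f(2)] inv_into_inv_into_eq[OF f(1)] by metis
  then show ?thesis
    using f bij_betw_inv_into unfolding Ck_diffeo_def by blast
qed

lemma Ck_diffeo_id:
  assumes "open S" "\<And>x. x \<in> S \<Longrightarrow> f x = x"
  shows "Ck_diffeo k S S f"
proof (rule Ck_diffeo_cong[OF _ assms(2)[symmetric]])
  have "inv_into S (\<lambda>x. x) x = x" if "x \<in> S" for x
    using that inv_into_f_f[of "\<lambda>x. x" S x] by simp
  then show "Ck_diffeo k S S (\<lambda>x. x)"
    using Ck_on_id[OF assms(1)] Ck_on_cong[OF _ Ck_on_id[OF assms(1)]]
    unfolding Ck_diffeo_def by (auto simp: bij_betw_def)
qed

section \<open>Monotone real functions\<close>

lemma DERIV_mono_comp_sign: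
  fixes p :: "real \<Rightarrow> real"
  assumes "mono f1" "mono f2"
    and f1: "((\<lambda>z. f1 (p z)) has_real_derivative d1) (at y)"
    and f2: "((\<lambda>z. f2 (p z)) has_real_derivative d2) (at y)"
    and "0 < d1"
  shows "0 \<le> d2"
proof (rule ccontr)
  assume "\<not> 0 \<le> d2"
  obtain e1 where "e1 > 0" and e1: "\<And>h. 0 < h \<Longrightarrow> h < e1 \<Longrightarrow> f1 (p y) < f1 (p (y + h))"
    using DERIV_pos_inc_right[OF f1 \<open>0 < d1\<close>] by auto
  obtain e2 where "e2 > 0" and e2: "\<And>h. 0 < h \<Longrightarrow> h < e2 \<Longrightarrow> f2 (p (y + h)) < f2 (p y)"
    using DERIV_neg_dec_right[OF f2] \<open>\<not> 0 \<le> d2\<close> by force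
  define h where "h = min e1 e2 / 2"
  have "0 < h" "h < e1" "h < e2"
    using \<open>e1 > 0\<close> \<open>e2 > 0\<close> by (auto simp: h_def)
  \<comment> \<open>\<open>p\<close> would have to move up and down at the same time\<close>
  have "p y < p (y + h)"
    using e1[OF \<open>0 < h\<close> \<open>h < e1\<close>] \<open>mono f1\<close> by (metis monoD not_le)
  moreover have "p (y + h) < p y"
    using e2[OF \<open>0 < h\<close> \<open>h < e2\<close>] \<open>mono f2\<close> by (metis monoD not_le)
  ultimately show False
    by simp
qed

lemma sum_DERIV_mono_comp_neq_0:
  fixes p :: "real \<Rightarrow> real"
  assumes "finite I" "\<And>i. i \<in> I \<Longrightarrow> mono (f i)"
    and D: "\<And>i. i \<in> I \<Longrightarrow> ((\<lambda>z. f i (p z)) has_real_derivative d i) (at y)"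
    and "i0 \<in> I" "d i0 \<noteq> 0"
  shows "(\<Sum>i\<in>I. d i) \<noteq> 0"
proof -
  have sum_eq: "(\<Sum>i\<in>I. d i) = d i0 + (\<Sum>i\<in>I - {i0}. d i)"
    using assms(1,4) by (simp add: sum.remove)
  show ?thesis
  proof (cases "0 < d i0")
    case True
    then have "0 \<le> d i" if "i \<in> I" for i
      using DERIV_mono_comp_sign[OF assms(2)[OF \<open>i0 \<in> I\<close>] assms(2)[OF that] D[OF \<open>i0 \<in> I\<close>] D[OF that]] by simp
    then show ?thesis
      using True sum_eq sum_nonneg[of "I - {i0}" d] by force
  next
    case False
    then have "d i \<le> 0" if "i \<in> I" for i
      using DERIV_mono_comp_sign[OF assms(2)[OF that] assms(2)[OF \<open>i0 \<in> I\<close>] D[OF that] D[OF \<open>i0 \<in> I\<close>]]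
        \<open>d i0 \<noteq> 0\<close> by force
    then show ?thesis
      using False \<open>d i0 \<noteq> 0\<close> sum_eq sum_nonpos[of "I - {i0}" d] by force
  qed
qed

lemma surj_if_shift_increasing:
  fixes f :: "real \<Rightarrow> real"
  assumes "continuous_on UNIV f" and shift: "\<And>x. f x + 1 \<le> f (x + c)"
  shows "surj f"
proof -
  have up: "f x + real n \<le> f (x + real n * c)" for x n
  proof (induction n)
    case (Suc n)
    then show ?case
      using shift[of "x + real n * c"] by (simp add: algebra_simps)
  qed simp
  have "y \<in> range f" for y
  proof -
    obtain n :: nat where n: "\<bar>y - f 0\<bar> \<le> real n"
      using real_arch_simple by blast
    have "f (- real n * c) \<le> y" "y \<le> f (real n * c)"
      using up[of "- real n * c" n] up[of 0 n] n by auto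
    moreover have "is_interval (range f)"
      using connected_continuous_image[OF assms(1) connected_UNIV] is_interval_connected_1 by blast
    ultimately show ?thesis
      unfolding is_interval_1 by blast
  qed
  then show ?thesis
    by blast
qed

lemma homeomorphic_map_if_strict_mono:
  fixes f :: "real \<Rightarrow> real"
  assumes "strict_mono f" "continuous_on UNIV f" "surj f"
  shows "homeomorphic_map euclideanreal euclideanreal f"
proof -
  have "inj f"
    using assms(1) strict_mono_imp_inj_on by blast
  have "continuous_on (range f) (inv f)"
    by (rule continuous_on_inverse_open[OF open_UNIV assms(2)]) (use \<open>inj f\<close> in auto)
  then show ?thesis
    unfolding homeomorphic_map_maps homeomorphic_maps_def
    using assms(2,3) \<open>inj f\<close> by (intro exI[of _ "inv f"]) (auto simp: surj_f_inv_f)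
qed

section \<open>Smooth steps\<close>

text \<open>Closure of this family under differentiation is what shows that \<open>exp_neg_inv 1\<close>, i.e.
  \<open>e\<^sup>-\<^sup>1\<^sup>/\<^sup>x\<close> extended by 0, is smooth at 0.\<close>
definition exp_neg_inv :: "real poly \<Rightarrow> real \<Rightarrow> real" where
  "exp_neg_inv P x = (if 0 < x then poly P (inverse x) * exp (- inverse x) else 0)"

definition exp_neg_inv_dpoly :: "real poly \<Rightarrow> real poly" where
  "exp_neg_inv_dpoly P = [:0, 0, 1:] * (P - pderiv P)"

lemma tendsto_poly_times_exp_neg_at_top:
  fixes P :: "real poly"
  shows "((\<lambda>t. poly P t * exp (- t)) \<longlongrightarrow> 0) at_top"
proof -
  have "poly P t * exp (- t) = (\<Sum>i\<le>degree P. coeff P i * (t ^ i / exp t))" for t :: real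
    by (simp add: poly_altdef sum_distrib_right exp_minus divide_inverse mult.assoc)
  moreover have "((\<lambda>t. \<Sum>i\<le>degree P. coeff P i * (t ^ i / exp t)) \<longlongrightarrow> (\<Sum>i\<le>degree P. coeff P i * 0)) at_top"
    by (intro tendsto_sum tendsto_mult tendsto_const tendsto_power_div_exp_0)
  ultimately show ?thesis
    by simp
qed

lemma exp_neg_inv_tendsto_0: "(exp_neg_inv P \<longlongrightarrow> 0) (at_right 0)"
proof (rule Lim_transform_eventually)
  show "((\<lambda>x. poly P (inverse x) * exp (- inverse x)) \<longlongrightarrow> 0) (at_right 0)"
    using filterlim_compose[OF tendsto_poly_times_exp_neg_at_top filterlim_inverse_at_top_right] .
  show "\<forall>\<^sub>F x in at_right 0. poly P (inverse x) * exp (- inverse x) = exp_neg_inv P x"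
    using eventually_at_right_less[of "0::real"] by eventually_elim (simp add: exp_neg_inv_def)
qed

lemma exp_neg_inv_has_real_derivative_0: "(exp_neg_inv P has_real_derivative 0) (at 0)"
proof -
  \<comment> \<open>the difference quotient at 0 from the right is \<open>exp_neg_inv ([:0, 1:] * P)\<close>\<close>
  have "((\<lambda>h. (exp_neg_inv P (0 + h) - exp_neg_inv P 0) / h) \<longlongrightarrow> 0) (at 0)"
    unfolding filterlim_at_split
  proof
    have "\<forall>\<^sub>F h in at_left 0. (exp_neg_inv P (0 + h) - exp_neg_inv P 0) / h = 0"
      by (rule eventually_at_leftI[of "-1"]) (auto simp: exp_neg_inv_def)
    then show "((\<lambda>h. (exp_neg_inv P (0 + h) - exp_neg_inv P 0) / h) \<longlongrightarrow> 0) (at_left 0)"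
      by (rule tendsto_eventually)
    have "\<forall>\<^sub>F h in at_right 0.
        exp_neg_inv ([:0, 1:] * P) h = (exp_neg_inv P (0 + h) - exp_neg_inv P 0) / h"
      using eventually_at_right_less[of "0::real"]
      by eventually_elim (simp add: exp_neg_inv_def field_simps)
    then show "((\<lambda>h. (exp_neg_inv P (0 + h) - exp_neg_inv P 0) / h) \<longlongrightarrow> 0) (at_right 0)"
      by (rule Lim_transform_eventually[OF exp_neg_inv_tendsto_0])
  qed
  then show ?thesis
    by (simp add: has_field_derivative_iff)
qed

lemma exp_neg_inv_has_real_derivative:
  "(exp_neg_inv P has_real_derivative exp_neg_inv (exp_neg_inv_dpoly P) x) (at x)"
proof -
  consider "0 < x" | "x < 0" | "x = 0"
    by linarith
  then show ?thesis
  proof cases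
    case 1
    have "((\<lambda>x. poly P (inverse x) * exp (- inverse x)) has_real_derivative
        poly (pderiv P) (inverse x) * (- (inverse x ^ 2)) * exp (- inverse x)
        + poly P (inverse x) * (exp (- inverse x) * (inverse x ^ 2))) (at x)"
      using 1 by (auto intro!: derivative_eq_intros DERIV_chain2[OF poly_DERIV] simp: power2_eq_square)
    moreover have "exp_neg_inv (exp_neg_inv_dpoly P) x =
        poly (pderiv P) (inverse x) * (- (inverse x ^ 2)) * exp (- inverse x)
        + poly P (inverse x) * (exp (- inverse x) * (inverse x ^ 2))"
      using 1 by (simp add: exp_neg_inv_def exp_neg_inv_dpoly_def algebra_simps power2_eq_square)
    ultimately have "((\<lambda>x. poly P (inverse x) * exp (- inverse x)) has_real_derivative
        exp_neg_inv (exp_neg_inv_dpoly P) x) (at x)"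
      by simp
    then show ?thesis
      by (rule has_field_derivative_transform_within_open[where S = "{0<..}"])
         (use 1 in \<open>auto simp: exp_neg_inv_def\<close>)
  next
    case 2
    have "((\<lambda>_. 0) has_real_derivative exp_neg_inv (exp_neg_inv_dpoly P) x) (at x)"
      using 2 by (simp add: exp_neg_inv_def)
    then show ?thesis
      by (rule has_field_derivative_transform_within_open[where S = "{..<0}"])
         (use 2 in \<open>auto simp: exp_neg_inv_def\<close>)
  next
    case 3
    then show ?thesis
      using exp_neg_inv_has_real_derivative_0 by (simp add: exp_neg_inv_def)
  qed
qed

lemma Cn_on_exp_neg_inv: "Cn_on n S (exp_neg_inv P)"
proof (induction n arbitrary: P)
  case 0
  have "isCont (exp_neg_inv P) x" for x
    using exp_neg_inv_has_real_derivative DERIV_isCont by blast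
  then show ?case
    by (simp add: continuous_at_imp_continuous_on)
next
  case (Suc n)
  have "deriv (exp_neg_inv P) = exp_neg_inv (exp_neg_inv_dpoly P)"
    using exp_neg_inv_has_real_derivative DERIV_imp_deriv by blast
  then show ?case
    using Suc exp_neg_inv_has_real_derivative real_differentiable_def by auto
qed

definition smooth_step :: "real \<Rightarrow> real" where
  "smooth_step x = exp_neg_inv 1 x / (exp_neg_inv 1 x + exp_neg_inv 1 (1 - x))"

lemma smooth_step_denominator_pos: "0 < exp_neg_inv 1 x + exp_neg_inv 1 (1 - x)"
  by (cases "0 < x") (auto simp: exp_neg_inv_def add_pos_nonneg add_nonneg_pos)

lemma Cn_on_smooth_step: "Cn_on n S smooth_step"
proof -
  have "Cn_on n UNIV (\<lambda>x. 1 + - 1 * x)"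
    by (intro Cn_on_add Cn_on_mult Cn_on_const Cn_on_id) auto
  then have "Cn_on n UNIV (\<lambda>x. exp_neg_inv 1 (1 - x))"
    using Cn_on_compose[OF open_UNIV open_UNIV Cn_on_exp_neg_inv] by simp
  then have "Cn_on n UNIV (\<lambda>x. exp_neg_inv 1 x * inverse (exp_neg_inv 1 x + exp_neg_inv 1 (1 - x)))"
    using smooth_step_denominator_pos
    by (intro Cn_on_mult Cn_on_exp_neg_inv Cn_on_compose[OF _ _ Cn_on_inverse] Cn_on_add)
       (auto simp: less_le)
  then show ?thesis
    using Cn_on_subset[of S UNIV] by (simp add: smooth_step_def[abs_def] divide_inverse)
qed

lemma smooth_step_eq_0: "x \<le> 0 \<Longrightarrow> smooth_step x = 0"
  by (simp add: smooth_step_def exp_neg_inv_def)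

lemma smooth_step_eq_1: "1 \<le> x \<Longrightarrow> smooth_step x = 1"
  by (simp add: smooth_step_def exp_neg_inv_def)

lemma smooth_step_has_real_derivative:
  obtains d where "(smooth_step has_real_derivative d) (at x)" "0 \<le> d" "0 < x \<Longrightarrow> x < 1 \<Longrightarrow> 0 < d"
proof -
  let ?e = "exp_neg_inv 1" and ?e' = "exp_neg_inv (exp_neg_inv_dpoly 1)"
  let ?den = "\<lambda>x. ?e x + ?e (1 - x)"
  have "((\<lambda>x. ?e (1 - x)) has_real_derivative ?e' (1 - x) * (- 1)) (at x)"
    by (rule DERIV_chain2[OF exp_neg_inv_has_real_derivative]) (auto intro!: derivative_eq_intros)
  then have "(smooth_step has_real_derivative
      (?e' x * ?den x - ?e x * (?e' x + ?e' (1 - x) * (- 1))) / (?den x * ?den x)) (at x)"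
    unfolding smooth_step_def[abs_def]
    using smooth_step_denominator_pos[of x]
    by (intro DERIV_divide DERIV_add exp_neg_inv_has_real_derivative) auto
  moreover have "?e' x * ?den x - ?e x * (?e' x + ?e' (1 - x) * (- 1))
      = ?e' x * ?e (1 - x) + ?e x * ?e' (1 - x)"
    by (simp add: algebra_simps)
  moreover have "0 \<le> ?e' x * ?e (1 - x) + ?e x * ?e' (1 - x)"
    and "0 < x \<Longrightarrow> x < 1 \<Longrightarrow> 0 < ?e' x * ?e (1 - x) + ?e x * ?e' (1 - x)"
    by (auto simp: exp_neg_inv_def exp_neg_inv_dpoly_def intro!: add_pos_pos mult_pos_pos)
  ultimately show ?thesis
    using that smooth_step_denominator_pos[of x] by (simp add: divide_nonneg_pos)
qed

lemma mono_smooth_step: "mono smooth_step"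
  by (metis DERIV_nonneg_imp_nondecreasing monoI smooth_step_has_real_derivative)

lemma smooth_step_strict_mono_on: "strict_mono_on {0..1} smooth_step"
proof (rule strict_mono_onI)
  fix a b :: real assume "a \<in> {0..1}" "b \<in> {0..1}" "a < b"
  show "smooth_step a < smooth_step b"
  proof (rule DERIV_pos_imp_increasing_open[OF \<open>a < b\<close>])
    fix x assume "a < x" "x < b"
    then have "0 < x" "x < 1"
      using \<open>a \<in> {0..1}\<close> \<open>b \<in> {0..1}\<close> by auto
    then show "\<exists>d. (smooth_step has_real_derivative d) (at x) \<and> 0 < d"
      using smooth_step_has_real_derivative by metis
  next
    show "continuous_on {a..b} smooth_step"
      using Cn_on_imp_continuous_on[OF Cn_on_smooth_step] .
  qed
qed

lemma Ck_on_smooth_step_affine: "Ck_on k UNIV (\<lambda>y. smooth_step ((y - c) / d))"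
proof -
  have "Ck_on k UNIV (\<lambda>y. (y + - c) * inverse d)"
    by (intro Ck_on_mult Ck_on_add Ck_on_id Ck_on_const) auto
  then have "Ck_on k UNIV (\<lambda>y. (y - c) / d)"
    by (rule Ck_on_cong[rotated]) (simp add: divide_inverse)
  then show ?thesis
    using Ck_on_compose[OF open_UNIV open_UNIV _ \<open>Ck_on k UNIV (\<lambda>y. (y - c) / d)\<close>] Cn_on_smooth_step
    by (simp add: Ck_on_iff_Cn_on)
qed

text \<open>Clamping the argument to \<open>[a, b]\<close> means that \<open>g\<close> is only evaluated there, inside the
  domain of its chart.\<close>
definition chart_step :: "(real \<Rightarrow> real) \<Rightarrow> real \<Rightarrow> real \<Rightarrow> real \<Rightarrow> real" where
  "chart_step g a b x = smooth_step ((g (max a (min b x)) - g a) / (g b - g a))"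

context
  fixes g :: "real \<Rightarrow> real" and I :: "real set" and a b :: real
  assumes interval: "is_interval I" and cont: "continuous_on I g" and inj: "inj_on g I"
    and ab: "a \<in> I" "b \<in> I" "a < b"
begin

lemma atLeastAtMost_subset_interval: "{a..b} \<subseteq> I"
  using mem_is_interval_1_I[OF interval ab(1,2)] by auto

lemma normalized_strict_mono_on: "strict_mono_on I (\<lambda>x. (g x - g a) / (g b - g a))"
proof -
  let ?q = "\<lambda>x. (g x - g a) / (g b - g a)"
  have "g a \<noteq> g b"
    using inj ab by (metis inj_onD less_irrefl)
  then have "?q a = 0" "?q b = 1"
    by auto
  moreover have "inj_on ?q I"
  proof (rule inj_onI)
    fix x y assume "x \<in> I" "y \<in> I" "?q x = ?q y"
    then have "g x = g y"
      using \<open>g a \<noteq> g b\<close> by (simp add: divide_cancel_right)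
    then show "x = y"
      using inj \<open>x \<in> I\<close> \<open>y \<in> I\<close> inj_onD by metis
  qed
  moreover have "continuous_on I ?q"
    using cont \<open>g a \<noteq> g b\<close> by (intro continuous_intros) auto
  ultimately consider "strict_mono_on I ?q" | "strict_antimono_on I ?q"
    using injective_eq_monotone_map[OF interval] by blast
  then show ?thesis
  proof cases
    case 2
    then have "?q b < ?q a"
      using monotone_onD[OF 2 ab] by simp
    with \<open>?q a = 0\<close> \<open>?q b = 1\<close> show ?thesis
      by simp
  qed
qed

lemma chart_step_eq_0: "x \<le> a \<Longrightarrow> chart_step g a b x = 0"
  using ab by (simp add: chart_step_def smooth_step_eq_0)

lemma chart_step_eq_1: "b \<le> x \<Longrightarrow> chart_step g a b x = 1"
proof -
  have "g a \<noteq> g b"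
    using inj ab by (metis inj_onD less_irrefl)
  then show "b \<le> x \<Longrightarrow> chart_step g a b x = 1"
    using ab by (simp add: chart_step_def smooth_step_eq_1)
qed

lemma chart_step_eq_on:
  assumes "x \<in> I"
  shows "chart_step g a b x = smooth_step ((g x - g a) / (g b - g a))"
proof -
  let ?q = "\<lambda>x. (g x - g a) / (g b - g a)"
  note q_strict = normalized_strict_mono_on
  consider "x < a" | "b < x" | "a \<le> x" "x \<le> b"
    by linarith
  then show ?thesis
  proof cases
    case 1
    then have "?q x \<le> 0"
      using strict_mono_onD[OF q_strict \<open>x \<in> I\<close> ab(1)] by simp
    then show ?thesis
      using 1 chart_step_eq_0 smooth_step_eq_0 by simp
  next
    case 2
    then have "1 \<le> ?q x"
      using strict_mono_onD[OF q_strict ab(2) \<open>x \<in> I\<close>] ab by (auto simp: divide_simps split: if_splits)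
    then show ?thesis
      using 2 chart_step_eq_1 smooth_step_eq_1 by simp
  next
    case 3
    then show ?thesis
      by (simp add: chart_step_def)
  qed
qed

lemma mono_chart_step: "mono (chart_step g a b)"
proof (rule monoI)
  fix x y :: real assume "x \<le> y"
  have I: "max a (min b x) \<in> I" "max a (min b y) \<in> I"
    using atLeastAtMost_subset_interval ab by auto
  have "(g (max a (min b x)) - g a) / (g b - g a) \<le> (g (max a (min b y)) - g a) / (g b - g a)"
    using strict_mono_on_leD[OF normalized_strict_mono_on I] \<open>x \<le> y\<close> by simp
  then show "chart_step g a b x \<le> chart_step g a b y"
    using monoD[OF mono_smooth_step] by (simp add: chart_step_def)
qed

lemma chart_step_strict:
  assumes "a < x" "x < b" "x < y"
  shows "chart_step g a b x < chart_step g a b y"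
proof -
  let ?q = "\<lambda>x. (g x - g a) / (g b - g a)"
  have I: "x \<in> I" "min b y \<in> I"
    using atLeastAtMost_subset_interval assms ab by auto
  have "?q a < ?q x" "?q x < ?q (min b y)"
    by (rule strict_mono_onD[OF normalized_strict_mono_on]; use I ab assms in simp)+
  moreover have "?q (min b y) \<le> ?q b"
    by (rule strict_mono_on_leD[OF normalized_strict_mono_on]) (use I ab in simp_all)
  moreover have "?q a = 0" "?q b = 1"
    using inj ab by (auto dest: inj_onD)
  ultimately have "smooth_step (?q x) < smooth_step (?q (min b y))"
    using strict_mono_onD[OF smooth_step_strict_mono_on] by simp
  moreover have "max a (min b x) = x" "max a (min b y) = min b y"
    using assms by auto
  ultimately show ?thesis
    by (simp add: chart_step_def)
qed

end

section \<open>\<open>C\<^sup>k\<close> structures on the real line\<close>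

locale real_Ck_structure =
  fixes k :: enat and C :: "(real set \<times> (real \<Rightarrow> real)) set"
  assumes one_le_k: "1 \<le> k"
    and chart: "\<And>V g. (V, g) \<in> C \<Longrightarrow> open V \<and> continuous_on V g \<and> inj_on g V"
    and charts_cover: "\<And>x. \<exists>(V, g)\<in>C. x \<in> V"
    and transition_Ck: "\<And>V g V' g'. (V, g) \<in> C \<Longrightarrow> (V', g') \<in> C \<Longrightarrow>
        Ck_on k (g ` (V \<inter> V')) (g' \<circ> inv_into V g)"
begin

lemma open_chart_image:
  assumes "(V, g) \<in> C" "open W"
  shows "open (g ` (V \<inter> W))"
proof -
  have "open V" "continuous_on V g" "inj_on g V"
    using chart[OF assms(1)] by auto
  then show ?thesis
    using assms(2) by (intro invariance_of_domain) (auto intro: continuous_on_subset inj_on_subset)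
qed

lemma chart_inv_into_mem:
  assumes "(V, g) \<in> C" "y \<in> g ` (V \<inter> W)"
  shows "inv_into V g y \<in> V \<inter> W"
  using assms chart[OF assms(1)] inv_into_f_f by fastforce

definition chart_Ck_on :: "real set \<Rightarrow> (real \<Rightarrow> real) \<Rightarrow> bool" where
  "chart_Ck_on S f \<longleftrightarrow> (\<forall>V g. (V, g) \<in> C \<longrightarrow> Ck_on k (g ` (V \<inter> S)) (f \<circ> inv_into V g))"

definition chart_regular_at :: "(real \<Rightarrow> real) \<Rightarrow> real \<Rightarrow> bool" where
  "chart_regular_at f x \<longleftrightarrow>
     (\<forall>V g. (V, g) \<in> C \<longrightarrow> x \<in> V \<longrightarrow> deriv (f \<circ> inv_into V g) (g x) \<noteq> 0)"

lemma chart_Ck_on_chart: "(V, g) \<in> C \<Longrightarrow> chart_Ck_on V g"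
  unfolding chart_Ck_on_def using transition_Ck by blast

lemma chart_Ck_on_subset: "T \<subseteq> S \<Longrightarrow> chart_Ck_on S f \<Longrightarrow> chart_Ck_on T f"
  unfolding chart_Ck_on_def by (force intro: Ck_on_subset[rotated])

lemma chart_Ck_on_cong:
  assumes "\<And>x. x \<in> S \<Longrightarrow> f x = f' x" "chart_Ck_on S f"
  shows "chart_Ck_on S f'"
  unfolding chart_Ck_on_def
proof (intro allI impI)
  fix V g assume "(V, g) \<in> C"
  have "(f \<circ> inv_into V g) y = (f' \<circ> inv_into V g) y" if "y \<in> g ` (V \<inter> S)" for y
    using chart_inv_into_mem[OF \<open>(V, g) \<in> C\<close> that] assms(1) by simp
  moreover have "Ck_on k (g ` (V \<inter> S)) (f \<circ> inv_into V g)"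
    using assms(2) \<open>(V, g) \<in> C\<close> by (simp add: chart_Ck_on_def)
  ultimately show "Ck_on k (g ` (V \<inter> S)) (f' \<circ> inv_into V g)"
    by (rule Ck_on_cong)
qed

lemma chart_Ck_on_local:
  assumes "open S" "\<And>x. x \<in> S \<Longrightarrow> \<exists>T. open T \<and> x \<in> T \<and> T \<subseteq> S \<and> chart_Ck_on T f"
  shows "chart_Ck_on S f"
  unfolding chart_Ck_on_def
proof (intro allI impI)
  fix V g assume Vg: "(V, g) \<in> C"
  show "Ck_on k (g ` (V \<inter> S)) (f \<circ> inv_into V g)"
  proof (rule Ck_on_local[OF open_chart_image[OF Vg \<open>open S\<close>]])
    fix y assume "y \<in> g ` (V \<inter> S)"
    then obtain x where x: "x \<in> V \<inter> S" "y = g x"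
      by blast
    then obtain T where "open T" "x \<in> T" "T \<subseteq> S" "chart_Ck_on T f"
      using assms(2) by blast
    then show "\<exists>T'. open T' \<and> y \<in> T' \<and> T' \<subseteq> g ` (V \<inter> S) \<and> Ck_on k T' (f \<circ> inv_into V g)"
      using Vg x open_chart_image[OF Vg \<open>open T\<close>]
      by (intro exI[of _ "g ` (V \<inter> T)"]) (auto simp: chart_Ck_on_def)
  qed
qed

lemma chart_Ck_on_const: "open S \<Longrightarrow> chart_Ck_on S (\<lambda>x. c)"
  unfolding chart_Ck_on_def using open_chart_image Ck_on_const by (auto simp: o_def)

lemma chart_Ck_on_compose:
  assumes "open S" "Ck_on k UNIV h" "chart_Ck_on S f"
  shows "chart_Ck_on S (\<lambda>x. h (f x))"
  unfolding chart_Ck_on_def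
proof (intro allI impI)
  fix V g assume "(V, g) \<in> C"
  then show "Ck_on k (g ` (V \<inter> S)) ((\<lambda>x. h (f x)) \<circ> inv_into V g)"
    using Ck_on_compose[OF open_chart_image[OF \<open>(V, g) \<in> C\<close> \<open>open S\<close>] open_UNIV assms(2)] assms(3)
    by (auto simp: chart_Ck_on_def o_def)
qed

lemma chart_Ck_on_sum:
  assumes "open S" "finite I" "\<And>i. i \<in> I \<Longrightarrow> chart_Ck_on S (f i)"
  shows "chart_Ck_on S (\<lambda>x. \<Sum>i\<in>I. f i x)"
  unfolding chart_Ck_on_def
proof (intro allI impI)
  fix V g assume "(V, g) \<in> C"
  then show "Ck_on k (g ` (V \<inter> S)) ((\<lambda>x. \<Sum>i\<in>I. f i x) \<circ> inv_into V g)"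
    using Ck_on_sum[OF open_chart_image[OF \<open>(V, g) \<in> C\<close> \<open>open S\<close>] assms(2),
        where f = "\<lambda>i. f i \<circ> inv_into V g"] assms(3)
    by (simp add: chart_Ck_on_def o_def)
qed

lemma chart_Ck_on_imp_continuous_on:
  assumes "open S" "chart_Ck_on S f"
  shows "continuous_on S f"
proof (intro continuous_at_imp_continuous_on ballI)
  fix x assume "x \<in> S"
  obtain V g where Vg: "(V, g) \<in> C" "x \<in> V"
    using charts_cover by blast
  have "open (V \<inter> S)"
    using chart[OF Vg(1)] assms(1) by blast
  have "Ck_on k (g ` (V \<inter> S)) (f \<circ> inv_into V g)"
    using assms(2) Vg(1) by (simp add: chart_Ck_on_def)
  then have "continuous_on (g ` (V \<inter> S)) (f \<circ> inv_into V g)"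
    by (rule Ck_on_imp_continuous_on)
  moreover have "continuous_on (V \<inter> S) g"
    using chart[OF Vg(1)] continuous_on_subset by blast
  ultimately have "continuous_on (V \<inter> S) (\<lambda>z. (f \<circ> inv_into V g) (g z))"
    by (rule continuous_on_compose2) simp
  moreover have "(f \<circ> inv_into V g) (g z) = f z" if "z \<in> V \<inter> S" for z
    using that chart[OF Vg(1)] by simp
  ultimately have "continuous_on (V \<inter> S) f"
    by (rule continuous_on_eq)
  then show "isCont f x"
    using continuous_on_eq_continuous_at[OF \<open>open (V \<inter> S)\<close>] Vg \<open>x \<in> S\<close> by blast
qed

lemma chart_DERIV:
  assumes "open S" "chart_Ck_on S f" "(V, g) \<in> C" "x \<in> V \<inter> S"
  shows "((f \<circ> inv_into V g) has_real_derivative deriv (f \<circ> inv_into V g) (g x)) (at (g x))"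
  using Ck_on_imp_DERIV[OF open_chart_image[OF assms(3,1)] one_le_k] assms(2-4)
  by (auto simp: chart_Ck_on_def)

lemma chart_regular_at_chart:
  assumes "(V, g) \<in> C" "x \<in> V"
  shows "chart_regular_at g x"
  unfolding chart_regular_at_def
proof (intro allI impI)
  fix V' g' assume V'g': "(V', g') \<in> C" "x \<in> V'"
  let ?t = "g \<circ> inv_into V' g'" and ?s = "g' \<circ> inv_into V g"
  have "(?t has_real_derivative deriv ?t (g' x)) (at (g' x))"
    using chart_DERIV[OF _ chart_Ck_on_chart[OF assms(1)] V'g'(1)] chart[OF assms(1)] assms V'g' by blast
  moreover have "(?s has_real_derivative deriv ?s (g x)) (at (g x))"
    using chart_DERIV[OF _ chart_Ck_on_chart[OF V'g'(1)] assms(1)] chart[OF V'g'(1)] assms V'g' by blast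
  moreover have "?t (g' x) = g x"
    using V'g' chart[OF V'g'(1)] by simp
  ultimately have "((\<lambda>z. ?s (?t z)) has_real_derivative deriv ?s (g x) * deriv ?t (g' x)) (at (g' x))"
    using DERIV_chain2[of ?s] by metis
  moreover have "((\<lambda>z. ?s (?t z)) has_real_derivative 1) (at (g' x))"
  proof (rule has_field_derivative_transform_within_open[OF DERIV_ident])
    show "open (g' ` (V' \<inter> V))"
      using open_chart_image V'g'(1) chart[OF assms(1)] by blast
    show "g' x \<in> g' ` (V' \<inter> V)"
      using assms V'g' by blast
    show "z = ?s (?t z)" if "z \<in> g' ` (V' \<inter> V)" for z
      using that chart[OF assms(1)] chart[OF V'g'(1)] by auto
  qed
  ultimately have "deriv ?s (g x) * deriv ?t (g' x) = 1"
    using DERIV_unique by blast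
  then show "deriv ?t (g' x) \<noteq> 0"
    by auto
qed

lemma chart_regular_at_cong:
  assumes "open S" "x \<in> S" "\<And>y. y \<in> S \<Longrightarrow> f y = f' y" "chart_regular_at f x"
  shows "chart_regular_at f' x"
  unfolding chart_regular_at_def
proof (intro allI impI)
  fix V g assume Vg: "(V, g) \<in> C" "x \<in> V"
  have "\<forall>\<^sub>F y in nhds (g x). (f \<circ> inv_into V g) y = (f' \<circ> inv_into V g) y"
  proof (rule eventually_nhds_in_open[OF open_chart_image[OF Vg(1) assms(1)], THEN eventually_mono])
    show "g x \<in> g ` (V \<inter> S)"
      using Vg assms(2) by blast
    show "(f \<circ> inv_into V g) y = (f' \<circ> inv_into V g) y" if "y \<in> g ` (V \<inter> S)" for y
      using chart_inv_into_mem[OF Vg(1) that] assms(3) by simp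
  qed
  then have "deriv (f \<circ> inv_into V g) (g x) = deriv (f' \<circ> inv_into V g) (g x)"
    by (rule deriv_cong_ev) simp
  moreover have "deriv (f \<circ> inv_into V g) (g x) \<noteq> 0"
    using assms(4) Vg unfolding chart_regular_at_def by blast
  ultimately show "deriv (f' \<circ> inv_into V g) (g x) \<noteq> 0"
    by simp
qed

lemma chart_regular_at_compose:
  assumes "open S" "x \<in> S" "chart_Ck_on S f" "chart_regular_at f x"
    and "(h has_real_derivative d) (at (f x))" "d \<noteq> 0"
  shows "chart_regular_at (\<lambda>x. h (f x)) x"
  unfolding chart_regular_at_def
proof (intro allI impI)
  fix V g assume Vg: "(V, g) \<in> C" "x \<in> V"
  have "(f \<circ> inv_into V g) (g x) = f x"
    using Vg chart by simp
  then have "((\<lambda>y. h ((f \<circ> inv_into V g) y)) has_real_derivative d * deriv (f \<circ> inv_into V g) (g x)) (at (g x))"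
    using DERIV_chain2[OF _ chart_DERIV[OF assms(1,3) Vg(1)]] assms(2,5) Vg(2) by simp
  then have "deriv ((\<lambda>x. h (f x)) \<circ> inv_into V g) (g x) = d * deriv (f \<circ> inv_into V g) (g x)"
    by (simp add: DERIV_imp_deriv o_def)
  then show "deriv ((\<lambda>x. h (f x)) \<circ> inv_into V g) (g x) \<noteq> 0"
    using assms(4,6) Vg by (simp add: chart_regular_at_def)
qed

lemma chart_regular_at_sum:
  assumes "open S" "x \<in> S" "finite I" "\<And>i. i \<in> I \<Longrightarrow> mono (f i)"
    and "\<And>i. i \<in> I \<Longrightarrow> chart_Ck_on S (f i)" "i0 \<in> I" "chart_regular_at (f i0) x"
  shows "chart_regular_at (\<lambda>x. \<Sum>i\<in>I. f i x) x"
  unfolding chart_regular_at_def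
proof (intro allI impI)
  fix V g assume Vg: "(V, g) \<in> C" "x \<in> V"
  define d where "d i = deriv (f i \<circ> inv_into V g) (g x)" for i
  have D: "((\<lambda>y. f i (inv_into V g y)) has_real_derivative d i) (at (g x))" if "i \<in> I" for i
    using chart_DERIV[OF assms(1) assms(5)[OF that] Vg(1)] assms(2) Vg(2) by (simp add: d_def o_def)
  then have "((\<lambda>y. \<Sum>i\<in>I. f i (inv_into V g y)) has_real_derivative (\<Sum>i\<in>I. d i)) (at (g x))"
    by (rule DERIV_sum)
  moreover have "(\<Sum>i\<in>I. d i) \<noteq> 0"
    using sum_DERIV_mono_comp_neq_0[OF assms(3,4) D assms(6)] assms(7) Vg
    by (simp add: d_def chart_regular_at_def)
  ultimately show "deriv ((\<lambda>x. \<Sum>i\<in>I. f i x) \<circ> inv_into V g) (g x) \<noteq> 0"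
    by (simp add: DERIV_imp_deriv o_def)
qed

end

context real_Ck_structure
begin

definition Ck_step :: "real \<Rightarrow> real \<Rightarrow> (real \<Rightarrow> real) \<Rightarrow> bool" where
  "Ck_step a b T \<longleftrightarrow> (\<forall>x\<le>a. T x = 0) \<and> (\<forall>x\<ge>b. T x = 1) \<and> mono T \<and> chart_Ck_on UNIV T \<and>
     (\<forall>x\<in>{a<..<b}. chart_regular_at T x \<and> (\<forall>y>x. T x < T y))"

context
  fixes V g I a b
  assumes Vg: "(V, g) \<in> C" and I: "open I" "is_interval I" "I \<subseteq> V" and ab: "a \<in> I" "b \<in> I" "a < b"
begin

lemma chart_continuous_inj_on: "continuous_on I g" "inj_on g I"
  using chart[OF Vg] I(3) by (auto intro: continuous_on_subset inj_on_subset)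

lemma chart_Ck_on_chart_step: "chart_Ck_on UNIV (chart_step g a b)"
proof (rule chart_Ck_on_local[OF open_UNIV])
  note interval_chart = I(2) chart_continuous_inj_on ab
  fix x
  have "x \<in> I" if "a \<le> x" "x \<le> b"
    using atLeastAtMost_subset_interval[OF interval_chart] that by auto
  then consider "x \<in> I" | "x < a" | "b < x"
    by force
  then show "\<exists>T. open T \<and> x \<in> T \<and> T \<subseteq> UNIV \<and> chart_Ck_on T (chart_step g a b)"
  proof cases
    case 1
    have "chart_Ck_on I (\<lambda>x. smooth_step ((g x - g a) / (g b - g a)))"
      using chart_Ck_on_compose[OF I(1) Ck_on_smooth_step_affine] chart_Ck_on_subset[OF I(3) chart_Ck_on_chart[OF Vg]] .
    then have "chart_Ck_on I (chart_step g a b)"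
      by (rule chart_Ck_on_cong[rotated]) (simp add: chart_step_eq_on[OF interval_chart])
    with 1 I(1) show ?thesis
      by blast
  next
    case 2
    have "chart_Ck_on {..<a} (chart_step g a b)"
      by (rule chart_Ck_on_cong[OF _ chart_Ck_on_const[of _ 0]]) (simp_all add: chart_step_eq_0[OF interval_chart])
    with 2 show ?thesis
      by (intro exI[of _ "{..<a}"]) simp
  next
    case 3
    have "chart_Ck_on {b<..} (chart_step g a b)"
      by (rule chart_Ck_on_cong[OF _ chart_Ck_on_const[of _ 1]]) (simp_all add: chart_step_eq_1[OF interval_chart])
    with 3 show ?thesis
      by (intro exI[of _ "{b<..}"]) simp
  qed
qed

lemma chart_regular_at_chart_step:
  assumes "a < x" "x < b"
  shows "chart_regular_at (chart_step g a b) x"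
proof -
  note interval_chart = I(2) chart_continuous_inj_on ab
  let ?q = "\<lambda>y. (y - g a) / (g b - g a)"
  have "g a \<noteq> g b"
    using chart_continuous_inj_on(2) ab by (metis inj_onD less_irrefl)
  have "x \<in> I"
    using atLeastAtMost_subset_interval[OF interval_chart] assms by auto
  have "?q (g a) < ?q (g x)" "?q (g x) < ?q (g b)"
    by (rule strict_mono_onD[OF normalized_strict_mono_on[OF interval_chart]]; use ab assms \<open>x \<in> I\<close> in simp)+
  then have "0 < ?q (g x)" "?q (g x) < 1"
    using \<open>g a \<noteq> g b\<close> by simp_all
  then obtain d where d: "(smooth_step has_real_derivative d) (at (?q (g x)))" "0 < d"
    using smooth_step_has_real_derivative by metis
  have "((\<lambda>y. smooth_step (?q y)) has_real_derivative d * (1 / (g b - g a))) (at (g x))"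
    using \<open>g a \<noteq> g b\<close>
    by (intro DERIV_chain2[where g = ?q and x = "g x", OF d(1)]) (auto intro!: derivative_eq_intros)
  then have "chart_regular_at (\<lambda>y. smooth_step (?q (g y))) x"
    using \<open>g a \<noteq> g b\<close> d(2) \<open>x \<in> I\<close>
    by (intro chart_regular_at_compose[OF I(1) _ chart_Ck_on_subset[OF I(3) chart_Ck_on_chart[OF Vg]]
          chart_regular_at_chart[OF Vg]]) (use I(3) in auto)
  then show ?thesis
    by (rule chart_regular_at_cong[OF I(1) \<open>x \<in> I\<close>, rotated]) (simp add: chart_step_eq_on[OF interval_chart])
qed

lemma Ck_step_chart_step: "Ck_step a b (chart_step g a b)"
  using chart_step_eq_0 chart_step_eq_1 mono_chart_step chart_step_strict
    chart_Ck_on_chart_step chart_regular_at_chart_step I(2) chart_continuous_inj_on ab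
  by (simp add: Ck_step_def)

end

lemma Ck_step_around:
  obtains \<rho> T where "0 < \<rho>" "\<rho> \<le> 1" "Ck_step (x - \<rho>) (x + \<rho>) T"
proof -
  obtain V g where Vg: "(V, g) \<in> C" "x \<in> V"
    using charts_cover by blast
  then obtain r where "0 < r" "ball x r \<subseteq> V"
    using chart open_contains_ball by blast
  define \<rho> where "\<rho> = min (r / 2) 1"
  have "Ck_step (x - \<rho>) (x + \<rho>) (chart_step g (x - \<rho>) (x + \<rho>))"
    using Vg(1) \<open>ball x r \<subseteq> V\<close> \<open>0 < r\<close>
    by (intro Ck_step_chart_step[of V g "ball x r"]) (auto simp: is_interval_ball_real \<rho>_def dist_real_def)
  moreover have "0 < \<rho>" "\<rho> \<le> 1"
    using \<open>0 < r\<close> by (auto simp: \<rho>_def)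
  ultimately show thesis
    using that by blast
qed

lemma finite_Ck_steps_cover:
  obtains B where "finite B" "\<And>T. T \<in> B \<Longrightarrow> \<exists>a b. c - 1 \<le> a \<and> b \<le> d + 1 \<and> Ck_step a b T"
    "\<And>x. x \<in> {c..d} \<Longrightarrow> \<exists>T\<in>B. \<exists>a b. a < x \<and> x < b \<and> Ck_step a b T"
proof -
  have "\<forall>x. \<exists>\<rho> T. 0 < \<rho> \<and> \<rho> \<le> 1 \<and> Ck_step (x - \<rho>) (x + \<rho>) T"
    by (metis Ck_step_around)
  then obtain \<rho> T where \<rho>T: "\<And>x. 0 < \<rho> x \<and> \<rho> x \<le> 1 \<and> Ck_step (x - \<rho> x) (x + \<rho> x) (T x)"
    by metis
  have "{c..d} \<subseteq> (\<Union>x\<in>{c..d}. {x - \<rho> x<..<x + \<rho> x})"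
    using \<rho>T by force
  then obtain X where X: "X \<subseteq> {c..d}" "finite X" "{c..d} \<subseteq> (\<Union>x\<in>X. {x - \<rho> x<..<x + \<rho> x})"
    by (rule compactE_image[OF compact_Icc, rotated]) auto
  show thesis
  proof (rule that[of "T ` X"])
    show "finite (T ` X)"
      using X(2) by simp
    show "\<exists>a b. c - 1 \<le> a \<and> b \<le> d + 1 \<and> Ck_step a b S" if S: "S \<in> T ` X" for S
    proof -
      obtain x where "x \<in> X" "S = T x"
        using S by blast
      moreover have "c - 1 \<le> x - \<rho> x" "x + \<rho> x \<le> d + 1"
        using \<open>x \<in> X\<close> X(1) \<rho>T[of x] by auto
      ultimately show ?thesis
        using \<rho>T by blast
    qed
    show "\<exists>S\<in>T ` X. \<exists>a b. a < x \<and> x < b \<and> Ck_step a b S" if "x \<in> {c..d}" for x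
      using that X(3) \<rho>T by fastforce
  qed
qed

lemma chart_Ck_diffeo:
  assumes "strict_mono F" "chart_Ck_on UNIV F" "\<And>x. chart_regular_at F x" "(V, g) \<in> C"
  shows "Ck_diffeo k (g ` V) (F ` V) (F \<circ> inv_into V g)"
proof -
  have "inj_on g V"
    using chart[OF assms(4)] by auto
  have "inj_on (F \<circ> inv_into V g) (g ` V)"
    using \<open>inj_on g V\<close> strict_mono_imp_inj_on[OF assms(1)]
    by (intro comp_inj_on inj_on_inv_into) (auto simp: inv_into_image_cancel inj_on_subset)
  moreover have "(F \<circ> inv_into V g) ` g ` V = F ` V"
    using \<open>inj_on g V\<close> by (metis image_comp inv_into_image_cancel order_refl)
  moreover have "Ck_on k (g ` V) (F \<circ> inv_into V g)"
    using assms(2,4) by (simp add: chart_Ck_on_def)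
  moreover have "deriv (F \<circ> inv_into V g) y \<noteq> 0" if "y \<in> g ` V" for y
    using that assms(3,4) \<open>inj_on g V\<close> by (auto simp: chart_regular_at_def)
  ultimately show ?thesis
    using Ck_diffeo_onto_image[OF open_chart_image[OF assms(4) open_UNIV, simplified]] by metis
qed

end

section \<open>A reparametrisation of the line by a sum of steps\<close>

locale Ck_step_family = real_Ck_structure +
  fixes B :: "int \<Rightarrow> (real \<Rightarrow> real) set"
  assumes finite_steps: "finite (B n)"
    and step_supported: "T \<in> B n \<Longrightarrow> \<exists>a b. of_int n - 1 \<le> a \<and> b \<le> of_int n + 2 \<and> Ck_step a b T"
    and steps_cover: "x \<in> {of_int n..of_int n + 1} \<Longrightarrow> \<exists>T\<in>B n. \<exists>a b. a < x \<and> x < b \<and> Ck_step a b T"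
begin

lemma family_step:
  assumes "T \<in> B n"
  shows "mono T" "chart_Ck_on UNIV T" "x \<le> of_int n - 1 \<Longrightarrow> T x = 0" "of_int n + 2 \<le> x \<Longrightarrow> T x = 1"
  using step_supported[OF assms] by (auto simp: Ck_step_def)

definition steps_upto :: "int \<Rightarrow> (real \<Rightarrow> real) set" where
  "steps_upto N = (\<Union>n\<in>{-N..N}. B n)"

definition step_sum :: "int \<Rightarrow> real \<Rightarrow> real" where
  "step_sum N x = (\<Sum>T\<in>steps_upto N. T x - T 0)"

text \<open>Normalising each step by its value at 0 makes all steps far from 0 and x contribute
  nothing, so the sum over all steps is locally finite.\<close>
definition total_step :: "real \<Rightarrow> real" where
  "total_step x = step_sum (\<lceil>\<bar>x\<bar>\<rceil> + 1) x"

lemma finite_steps_upto: "finite (steps_upto N)"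
  by (simp add: steps_upto_def finite_steps)

lemma steps_upto_mem: "T \<in> B n \<Longrightarrow> \<bar>n\<bar> \<le> N \<Longrightarrow> T \<in> steps_upto N"
  unfolding steps_upto_def by (intro UN_I[of n]) auto

lemma step_sum_eq:
  assumes "\<bar>x\<bar> + 1 \<le> of_int M" "M \<le> N"
  shows "step_sum N x = step_sum M x"
  unfolding step_sum_def
proof (rule sum.mono_neutral_right[OF finite_steps_upto])
  show "steps_upto M \<subseteq> steps_upto N"
    unfolding steps_upto_def using assms(2) by (intro UN_mono) auto
  show "\<forall>T\<in>steps_upto N - steps_upto M. T x - T 0 = 0"
  proof
    fix T assume "T \<in> steps_upto N - steps_upto M"
    then obtain n where "T \<in> B n" "M + 1 \<le> \<bar>n\<bar>"
      by (force simp: steps_upto_def)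
    then have n: "real_of_int M + 1 \<le> \<bar>real_of_int n\<bar>"
      by (metis of_int_abs of_int_add of_int_le_iff of_int_1)
    show "T x - T 0 = 0"
    proof (cases "0 \<le> n")
      case True
      then have "x \<le> of_int n - 1" "(0::real) \<le> of_int n - 1"
        using n assms(1) by auto
      then show ?thesis
        by (simp add: family_step(3)[OF \<open>T \<in> B n\<close>])
    next
      case False
      then have "of_int n + 2 \<le> x" "of_int n + 2 \<le> (0::real)"
        using n assms(1) by auto
      then show ?thesis
        by (simp add: family_step(4)[OF \<open>T \<in> B n\<close>])
    qed
  qed
qed

lemma total_step_eq_step_sum: "\<bar>x\<bar> + 1 \<le> of_int N \<Longrightarrow> total_step x = step_sum N x"
  unfolding total_step_def using step_sum_eq[of x "\<lceil>\<bar>x\<bar>\<rceil> + 1" N] by linarith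

lemma mono_step_sum_term: "T \<in> steps_upto N \<Longrightarrow> mono (\<lambda>x. T x - T 0)"
  using family_step(1) by (auto simp: steps_upto_def mono_def)

lemma strict_mono_total_step: "strict_mono total_step"
proof (rule strict_monoI)
  fix x y :: real assume "x < y"
  define N where "N = \<lceil>\<bar>x\<bar> + \<bar>y\<bar>\<rceil> + 1"
  obtain T a b where T: "T \<in> B \<lfloor>x\<rfloor>" "a < x" "x < b" "Ck_step a b T"
    using steps_cover[of x "\<lfloor>x\<rfloor>"] by auto
  have "T \<in> steps_upto N"
    by (rule steps_upto_mem[OF T(1)]) (simp add: N_def; linarith)
  moreover have "T x < T y"
    using T \<open>x < y\<close> by (auto simp: Ck_step_def)
  ultimately have "step_sum N x < step_sum N y"
    unfolding step_sum_def
    using \<open>x < y\<close> mono_step_sum_term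
    by (intro sum_strict_mono_ex1[OF finite_steps_upto]) (auto simp: mono_def)
  moreover have "total_step x = step_sum N x" "total_step y = step_sum N y"
    by (rule total_step_eq_step_sum; simp add: N_def; linarith)+
  ultimately show "total_step x < total_step y"
    by simp
qed

lemma total_step_shift: "total_step x + 1 \<le> total_step (x + 4)"
proof -
  define n where "n = \<lceil>x\<rceil> + 1"
  define N where "N = \<lceil>\<bar>x\<bar>\<rceil> + 6"
  obtain T where T: "T \<in> B n"
    using steps_cover[of "of_int n" n] by auto
  have "T \<in> steps_upto N"
    by (rule steps_upto_mem[OF T]) (simp add: N_def n_def; linarith)
  have "T x = 0" "T (x + 4) = 1"
    by (rule family_step(3)[OF T] family_step(4)[OF T], unfold n_def, linarith)+
  have "T (x + 4) - T 0 - (T x - T 0) \<le> (\<Sum>S\<in>steps_upto N. (S (x + 4) - S 0) - (S x - S 0))"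
    using mono_step_sum_term
    by (intro member_le_sum[OF \<open>T \<in> steps_upto N\<close> _ finite_steps_upto]) (auto simp: mono_def)
  then have "1 \<le> (\<Sum>S\<in>steps_upto N. (S (x + 4) - S 0) - (S x - S 0))"
    using \<open>T x = 0\<close> \<open>T (x + 4) = 1\<close> by simp
  also have "\<dots> = step_sum N (x + 4) - step_sum N x"
    by (simp add: step_sum_def sum_subtractf)
  also have "\<dots> = total_step (x + 4) - total_step x"
    using total_step_eq_step_sum[of x N] total_step_eq_step_sum[of "x + 4" N]
    by (simp add: N_def; linarith)
  finally show ?thesis
    by simp
qed

lemma chart_Ck_on_step_sum_term:
  assumes "T \<in> steps_upto N"
  shows "chart_Ck_on UNIV (\<lambda>x. T x - T 0)"
proof -
  have "Ck_on k UNIV (\<lambda>y. y + - T 0)"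
    by (intro Ck_on_add Ck_on_id Ck_on_const) auto
  moreover have "chart_Ck_on UNIV T"
    using assms family_step(2) by (auto simp: steps_upto_def)
  ultimately show ?thesis
    using chart_Ck_on_compose[OF open_UNIV] by fastforce
qed

lemma chart_Ck_on_step_sum: "chart_Ck_on UNIV (step_sum N)"
  unfolding step_sum_def[abs_def]
  by (intro chart_Ck_on_sum[OF open_UNIV finite_steps_upto] chart_Ck_on_step_sum_term)

lemma total_step_eq_step_sum_near: "y \<in> ball x 1 \<Longrightarrow> total_step y = step_sum (\<lceil>\<bar>x\<bar>\<rceil> + 2) y"
  by (rule total_step_eq_step_sum) (auto simp: dist_real_def, linarith)

lemma chart_Ck_on_total_step: "chart_Ck_on UNIV total_step"
proof (rule chart_Ck_on_local[OF open_UNIV])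
  fix x
  have "chart_Ck_on (ball x 1) (step_sum (\<lceil>\<bar>x\<bar>\<rceil> + 2))"
    by (rule chart_Ck_on_subset[OF _ chart_Ck_on_step_sum]) simp
  then have "chart_Ck_on (ball x 1) total_step"
    by (rule chart_Ck_on_cong[rotated]) (simp add: total_step_eq_step_sum_near)
  then show "\<exists>T. open T \<and> x \<in> T \<and> T \<subseteq> UNIV \<and> chart_Ck_on T total_step"
    by (intro exI[of _ "ball x 1"]) simp
qed

lemma chart_regular_at_total_step: "chart_regular_at total_step x"
proof -
  define N where "N = \<lceil>\<bar>x\<bar>\<rceil> + 2"
  obtain T a b where T: "T \<in> B \<lfloor>x\<rfloor>" "a < x" "x < b" "Ck_step a b T"
    using steps_cover[of x "\<lfloor>x\<rfloor>"] by auto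
  have "T \<in> steps_upto N"
    by (rule steps_upto_mem[OF T(1)]) (simp add: N_def; linarith)
  moreover have "chart_regular_at (\<lambda>y. T y - T 0) x"
    using T(2-4) family_step(2)[OF T(1)]
    by (intro chart_regular_at_compose[OF open_UNIV, where h = "\<lambda>y. y - T 0" and d = 1])
       (auto simp: Ck_step_def intro!: derivative_eq_intros)
  ultimately have "chart_regular_at (step_sum N) x"
    unfolding step_sum_def[abs_def]
    by (intro chart_regular_at_sum[where f = "\<lambda>T x. T x - T 0", OF open_UNIV _ finite_steps_upto
          mono_step_sum_term chart_Ck_on_step_sum_term]) auto
  then show ?thesis
    by (rule chart_regular_at_cong[OF open_ball[of x 1], rotated 2])
       (auto simp: total_step_eq_step_sum_near N_def)
qed

end

context real_Ck_structure
begin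

lemma exists_Ck_step_family: "\<exists>B. Ck_step_family k C B"
proof -
  have "\<exists>S. finite S \<and>
      (\<forall>T\<in>S. \<exists>a b. of_int n - 1 \<le> a \<and> b \<le> of_int n + 1 + 1 \<and> Ck_step a b T) \<and>
      (\<forall>x\<in>{of_int n..of_int n + 1}. \<exists>T\<in>S. \<exists>a b. a < x \<and> x < b \<and> Ck_step a b T)" for n :: int
    by (rule finite_Ck_steps_cover[where c = "of_int n" and d = "of_int n + 1"]) blast
  then obtain B where "\<And>n. finite (B n) \<and>
      (\<forall>T\<in>B n. \<exists>a b. of_int n - 1 \<le> a \<and> b \<le> of_int n + 1 + 1 \<and> Ck_step a b T) \<and>
      (\<forall>x\<in>{of_int n..of_int n + 1}. \<exists>T\<in>B n. \<exists>a b. a < x \<and> x < b \<and> Ck_step a b T)"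
    by metis
  then have "Ck_step_family k C B"
    by (intro Ck_step_family.intro Ck_step_family_axioms.intro real_Ck_structure_axioms)
       (simp_all add: add.assoc)
  then show ?thesis
    by blast
qed

theorem exists_homeomorphism_Ck_diffeo_in_charts:
  "\<exists>F. homeomorphic_map euclideanreal euclideanreal F \<and>
     (\<forall>V g. (V, g) \<in> C \<longrightarrow> Ck_diffeo k (g ` V) (F ` V) (F \<circ> inv_into V g))"
proof -
  obtain B where "Ck_step_family k C B"
    using exists_Ck_step_family by blast
  then interpret Ck_step_family k C B .
  have "continuous_on UNIV total_step"
    by (rule chart_Ck_on_imp_continuous_on[OF open_UNIV chart_Ck_on_total_step])
  then have "homeomorphic_map euclideanreal euclideanreal total_step"
    using homeomorphic_map_if_strict_mono strict_mono_total_step surj_if_shift_increasing total_step_shift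
    by blast
  then show ?thesis
    using chart_Ck_diffeo[OF strict_mono_total_step chart_Ck_on_total_step chart_regular_at_total_step] by blast
qed

end

section \<open>Charts and atlases\<close>

lemma chart_inj_on:
  assumes "is_chart M (V, \<psi>)"
  shows "inj_on \<psi> V"
proof -
  have "openin M V" "homeomorphic_map (subtopology M V) (subtopology euclideanreal (\<psi> ` V)) \<psi>"
    using assms unfolding is_chart_def by auto
  then show ?thesis
    using openin_subset[of M V] unfolding homeomorphic_map_def by (simp add: Int_absorb1)
qed

lemma Ck_atlas_transition:
  assumes "Ck_atlas k M A" "(V, \<psi>) \<in> A" "(V', \<psi>') \<in> A"
  shows "Ck_on k (\<psi> ` (V \<inter> V')) (\<psi>' \<circ> inv_into V \<psi>)"
proof (cases "V \<inter> V' = {}")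
  case False
  have "Ck_compatible_charts k (V, \<psi>) (V', \<psi>')"
    using assms unfolding Ck_atlas_def by blast
  with False show ?thesis
    by (simp add: Ck_compatible_charts_def Ck_diffeo_def)
qed (simp add: Ck_on_empty)

lemma Ck_compatible_charts_sym:
  assumes "is_chart M (U, \<phi>)" "is_chart M (V, \<psi>)" "Ck_compatible_charts k (U, \<phi>) (V, \<psi>)"
  shows "Ck_compatible_charts k (V, \<psi>) (U, \<phi>)"
proof (cases "U \<inter> V = {}")
  case False
  then have "Ck_diffeo k (\<phi> ` (U \<inter> V)) (\<psi> ` (U \<inter> V)) (\<psi> \<circ> inv_into U \<phi>)"
    using assms(3) by (simp add: Ck_compatible_charts_def)
  then have "Ck_diffeo k (\<psi> ` (U \<inter> V)) (\<phi> ` (U \<inter> V)) (inv_into (\<phi> ` (U \<inter> V)) (\<psi> \<circ> inv_into U \<phi>))"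
    by (rule Ck_diffeo_inv_into)
  moreover have "inv_into (\<phi> ` (U \<inter> V)) (\<psi> \<circ> inv_into U \<phi>) y = (\<phi> \<circ> inv_into V \<psi>) y"
    if y: "y \<in> \<psi> ` (U \<inter> V)" for y
  proof -
    obtain x where "x \<in> U \<inter> V" "y = \<psi> x"
      using y by blast
    moreover have "inj_on (\<psi> \<circ> inv_into U \<phi>) (\<phi> ` (U \<inter> V))"
      using chart_inj_on[OF assms(1)] chart_inj_on[OF assms(2)] by (auto simp: inj_on_def)
    ultimately show ?thesis
      using chart_inj_on[OF assms(1)] chart_inj_on[OF assms(2)]
      by (auto intro!: inv_into_f_eq)
  qed
  ultimately show ?thesis
    using Ck_diffeo_cong by (simp add: Ck_compatible_charts_def Int_commute)
qed (simp add: Ck_compatible_charts_def Int_commute)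

lemma Ck_compatible_charts_refl:
  assumes "is_chart M (U, \<phi>)"
  shows "Ck_compatible_charts k (U, \<phi>) (U, \<phi>)"
  using assms chart_inj_on[OF assms]
  by (auto simp: Ck_compatible_charts_def is_chart_def intro!: Ck_diffeo_id)

lemma Ck_atlas_insert:
  assumes "Ck_atlas k M A" "is_chart M (U, \<phi>)"
    and "\<And>V \<psi>. (V, \<psi>) \<in> A \<Longrightarrow> Ck_compatible_charts k (V, \<psi>) (U, \<phi>)"
  shows "Ck_atlas k M (A \<union> {(U, \<phi>)})"
proof -
  have "U \<subseteq> topspace M"
    using assms(2) openin_subset by (auto simp: is_chart_def)
  moreover have "Ck_compatible_charts k (U, \<phi>) (V, \<psi>)" if "(V, \<psi>) \<in> A" for V \<psi>
    using Ck_compatible_charts_sym[OF _ _ assms(3)[OF that]] assms(1,2) that unfolding Ck_atlas_def by blast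
  moreover have "Ck_compatible_charts k (U, \<phi>) (U, \<phi>)"
    using Ck_compatible_charts_refl assms(2) .
  ultimately show ?thesis
    using assms unfolding Ck_atlas_def by (auto simp: split_paired_all)
qed

lemma is_chart_onto_real:
  assumes "openin M U" "homeomorphic_map (subtopology M U) euclideanreal \<phi>"
  shows "is_chart M (U, \<phi>)"
proof -
  have "\<phi> ` U = UNIV"
    using homeomorphic_imp_surjective_map[OF assms(2)] openin_subset[OF assms(1)] by (simp add: Int_absorb1)
  then show ?thesis
    using assms by (simp add: is_chart_def)
qed

context
  fixes M :: "'a topology" and U :: "'a set" and h :: "'a \<Rightarrow> real" and h' :: "real \<Rightarrow> 'a"
  assumes U_open: "openin M U" and h_homeo: "homeomorphic_maps (subtopology M U) euclideanreal h h'"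
begin

lemma transport_inverse: "x \<in> U \<Longrightarrow> h' (h x) = x" "h (h' t) = t" "h' t \<in> U"
proof -
  have "topspace (subtopology M U) = U"
    using openin_subset[OF U_open] by auto
  then show "x \<in> U \<Longrightarrow> h' (h x) = x" "h (h' t) = t"
    using h_homeo by (auto simp: homeomorphic_maps_def)
  show "h' t \<in> U"
    using h_homeo by (auto simp: homeomorphic_maps_def continuous_map_in_subtopology)
qed

lemma open_transported_domain: "openin M V \<Longrightarrow> open (h ` (U \<inter> V))"
  using homeomorphic_map_openness[OF homeomorphic_maps_map[THEN iffD1, OF h_homeo, THEN conjunct1], of "U \<inter> V"]
    openin_subset[OF U_open] by (auto simp: openin_subtopology)

lemma transported_chart_image: "(\<psi> \<circ> h') ` h ` (U \<inter> V) = \<psi> ` (U \<inter> V)"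
  using transport_inverse(1) by (force simp: image_image)

lemma inv_into_transported_chart:
  assumes "inj_on \<psi> V" "x \<in> U \<inter> V"
  shows "inv_into (h ` (U \<inter> V)) (\<psi> \<circ> h') (\<psi> x) = h x"
proof (rule inv_into_f_eq)
  show "inj_on (\<psi> \<circ> h') (h ` (U \<inter> V))"
    using assms(1) transport_inverse by (auto simp: inj_on_def)
qed (use assms transport_inverse in auto)

lemma transported_chart_Ck_transition:
  assumes "Ck_atlas k M A" "(V, \<psi>) \<in> A" "(V', \<psi>') \<in> A"
  shows "Ck_on k ((\<psi> \<circ> h') ` (h ` (U \<inter> V) \<inter> h ` (U \<inter> V')))
           ((\<psi>' \<circ> h') \<circ> inv_into (h ` (U \<inter> V)) (\<psi> \<circ> h'))"
proof -
  have "inj_on \<psi> V"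
    using assms(1,2) chart_inj_on unfolding Ck_atlas_def by blast
  have "inj_on h U"
    using transport_inverse(1) by (rule inj_on_inverseI)
  then have Int_eq: "h ` (U \<inter> V) \<inter> h ` (U \<inter> V') = h ` (U \<inter> (V \<inter> V'))"
    by (simp add: inj_on_image_Int[symmetric] Int_ac)
  have dom: "(\<psi> \<circ> h') ` (h ` (U \<inter> V) \<inter> h ` (U \<inter> V')) = \<psi> ` (U \<inter> (V \<inter> V'))"
    unfolding Int_eq by (rule transported_chart_image)
  have "Ck_on k (\<psi> ` (V \<inter> V')) (\<psi>' \<circ> inv_into V \<psi>)"
    by (rule Ck_atlas_transition[OF assms])
  then have "Ck_on k (\<psi> ` (U \<inter> (V \<inter> V'))) (\<psi>' \<circ> inv_into V \<psi>)"
    by (rule Ck_on_subset[rotated]) auto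
  moreover have "(\<psi>' \<circ> inv_into V \<psi>) y = ((\<psi>' \<circ> h') \<circ> inv_into (h ` (U \<inter> V)) (\<psi> \<circ> h')) y"
    if "y \<in> \<psi> ` (U \<inter> (V \<inter> V'))" for y
    using that inv_into_transported_chart[OF \<open>inj_on \<psi> V\<close>] \<open>inj_on \<psi> V\<close> transport_inverse(1) by auto
  ultimately show ?thesis
    unfolding dom by (rule Ck_on_cong[rotated])
qed

lemma transported_chart:
  assumes "is_chart M (V, \<psi>)"
  shows "open (h ` (U \<inter> V))" "continuous_on (h ` (U \<inter> V)) (\<psi> \<circ> h')" "inj_on (\<psi> \<circ> h') (h ` (U \<inter> V))"
proof -
  have chart: "openin M V" "homeomorphic_map (subtopology M V) (subtopology euclideanreal (\<psi> ` V)) \<psi>"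
    using assms unfolding is_chart_def by auto
  show "open (h ` (U \<inter> V))"
    using chart(1) by (rule open_transported_domain)
  have "h' ` h ` (U \<inter> V) \<subseteq> V"
    using transport_inverse(1) by auto
  then have "continuous_map (subtopology euclideanreal (h ` (U \<inter> V))) (subtopology M V) h'"
    using h_homeo transport_inverse(3)
    by (auto simp: homeomorphic_maps_def continuous_map_in_subtopology continuous_map_from_subtopology)
  then have "continuous_map (subtopology euclideanreal (h ` (U \<inter> V))) (subtopology euclideanreal (\<psi> ` V))
      (\<psi> \<circ> h')"
    using continuous_map_compose homeomorphic_imp_continuous_map[OF chart(2)] by blast
  then show "continuous_on (h ` (U \<inter> V)) (\<psi> \<circ> h')"
    by simp
  show "inj_on (\<psi> \<circ> h') (h ` (U \<inter> V))"
    using chart_inj_on[OF assms] transport_inverse(1) by (auto simp: inj_on_def)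
qed

lemma real_Ck_structure_transport:
  assumes "1 \<le> k" "Ck_atlas k M A"
  shows "real_Ck_structure k {(h ` (U \<inter> V), \<psi> \<circ> h') | V \<psi>. (V, \<psi>) \<in> A}"
proof
  fix W g assume "(W, g) \<in> {(h ` (U \<inter> V), \<psi> \<circ> h') | V \<psi>. (V, \<psi>) \<in> A}"
  then obtain V \<psi> where "(V, \<psi>) \<in> A" "W = h ` (U \<inter> V)" "g = \<psi> \<circ> h'"
    by blast
  moreover have "is_chart M (V, \<psi>)"
    using assms(2) \<open>(V, \<psi>) \<in> A\<close> unfolding Ck_atlas_def by blast
  ultimately show "open W \<and> continuous_on W g \<and> inj_on g W"
    using transported_chart by blast
next
  fix x
  have "h' x \<in> \<Union> (fst ` A)"
    using assms(2) transport_inverse(3) openin_subset[OF U_open] unfolding Ck_atlas_def by auto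
  then obtain V \<psi> where "(V, \<psi>) \<in> A" "h' x \<in> V"
    by auto
  moreover have "x \<in> h ` (U \<inter> V)"
    using \<open>h' x \<in> V\<close> transport_inverse(2,3) by (metis IntI image_eqI)
  ultimately show "\<exists>(W, g)\<in>{(h ` (U \<inter> V), \<psi> \<circ> h') | V \<psi>. (V, \<psi>) \<in> A}. x \<in> W"
    by blast
next
  fix W g W' g'
  assume "(W, g) \<in> {(h ` (U \<inter> V), \<psi> \<circ> h') | V \<psi>. (V, \<psi>) \<in> A}"
    "(W', g') \<in> {(h ` (U \<inter> V), \<psi> \<circ> h') | V \<psi>. (V, \<psi>) \<in> A}"
  then show "Ck_on k (g ` (W \<inter> W')) (g' \<circ> inv_into W g)"
    using transported_chart_Ck_transition[OF assms(2)] by blast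
qed (rule assms(1))

lemma transported_chart_compatible:
  assumes "is_chart M (V, \<psi>)"
    and "Ck_diffeo k (\<psi> ` (U \<inter> V)) (F ` h ` (U \<inter> V)) (F \<circ> inv_into (h ` (U \<inter> V)) (\<psi> \<circ> h'))"
  shows "Ck_compatible_charts k (V, \<psi>) (U, F \<circ> h)"
proof -
  have "(F \<circ> inv_into (h ` (U \<inter> V)) (\<psi> \<circ> h')) y = (F \<circ> h \<circ> inv_into V \<psi>) y"
    if "y \<in> \<psi> ` (U \<inter> V)" for y
    using that inv_into_transported_chart[OF chart_inj_on[OF assms(1)]] chart_inj_on[OF assms(1)] by auto
  then have "Ck_diffeo k (\<psi> ` (V \<inter> U)) ((F \<circ> h) ` (V \<inter> U)) (F \<circ> h \<circ> inv_into V \<psi>)"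
    using Ck_diffeo_cong[OF assms(2)] by (simp add: image_comp Int_commute)
  then show ?thesis
    by (simp add: Ck_compatible_charts_def)
qed

lemma transported_atlas_extension:
  assumes "Ck_atlas k M A" "homeomorphic_map euclideanreal euclideanreal F"
    and F: "\<And>W g. (W, g) \<in> {(h ` (U \<inter> V), \<psi> \<circ> h') | V \<psi>. (V, \<psi>) \<in> A} \<Longrightarrow>
      Ck_diffeo k (g ` W) (F ` W) (F \<circ> inv_into W g)"
  shows "homeomorphic_map (subtopology M U) euclideanreal (F \<circ> h)" "Ck_atlas k M (A \<union> {(U, F \<circ> h)})"
proof -
  show \<phi>: "homeomorphic_map (subtopology M U) euclideanreal (F \<circ> h)"
    using homeomorphic_map_compose[OF _ assms(2)] h_homeo homeomorphic_maps_map by blast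
  have "Ck_compatible_charts k (V, \<psi>) (U, F \<circ> h)" if "(V, \<psi>) \<in> A" for V \<psi>
  proof (rule transported_chart_compatible)
    show "is_chart M (V, \<psi>)"
      using assms(1) that unfolding Ck_atlas_def by blast
    have "(h ` (U \<inter> V), \<psi> \<circ> h') \<in> {(h ` (U \<inter> V), \<psi> \<circ> h') | V \<psi>. (V, \<psi>) \<in> A}"
      using that by blast
    from F[OF this]
    show "Ck_diffeo k (\<psi> ` (U \<inter> V)) (F ` h ` (U \<inter> V)) (F \<circ> inv_into (h ` (U \<inter> V)) (\<psi> \<circ> h'))"
      unfolding transported_chart_image .
  qed
  then show "Ck_atlas k M (A \<union> {(U, F \<circ> h)})"
    using Ck_atlas_insert[OF assms(1) is_chart_onto_real[OF U_open \<phi>]] by blast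
qed

end

theorem corollary4p7:
  fixes k :: enat and M :: "'a topology" and A :: "('a set \<times> ('a \<Rightarrow> real)) set" and U :: "'a set"
  assumes "k \<ge> 1"
    and "locally_euclidean1 M"
    and "Ck_atlas k M A"
    and "openin M U"
    and "subtopology M U homeomorphic_space euclideanreal"
  shows "\<exists>\<phi>. homeomorphic_map (subtopology M U) euclideanreal \<phi> \<and>
             Ck_atlas k M (A \<union> {(U, \<phi>)}) \<and>
             Ck_atlases_compatible k M A {(U, \<phi>)}"
proof -
  obtain h h' where hh': "homeomorphic_maps (subtopology M U) euclideanreal h h'"
    using assms(5) unfolding homeomorphic_space_def by blast
  interpret real_Ck_structure k "{(h ` (U \<inter> V), \<psi> \<circ> h') | V \<psi>. (V, \<psi>) \<in> A}"
    by (rule real_Ck_structure_transport[OF assms(4) hh' assms(1,3)])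
  obtain F where "homeomorphic_map euclideanreal euclideanreal F"
    "\<And>W g. (W, g) \<in> {(h ` (U \<inter> V), \<psi> \<circ> h') | V \<psi>. (V, \<psi>) \<in> A} \<Longrightarrow>
       Ck_diffeo k (g ` W) (F ` W) (F \<circ> inv_into W g)"
    using exists_homeomorphism_Ck_diffeo_in_charts by blast
  then show ?thesis
    using transported_atlas_extension[OF assms(4) hh' assms(3)]
    unfolding Ck_atlases_compatible_def by blast
qed

end
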